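(* For every integer $r\geq 0$, $$t(\underbrace{2,2,\ldots,2}_{r},3)=\sum_{k=1}^{r+1}(-1)^{k+1}\,d_{r,0}^k\,\frac{1}{2^{2k}}\,\zeta(2k+1)\,t(\underbrace{2,2,\ldots,2}_{r+1-k}),$$ where $d_{r,0}^k=\binom{2k}{2r+1}+\left(1-\frac{1}{2^{2k}}\right)2k$.
   Context: For positive integers $k_1,\ldots,k_m$ with $k_m>1$, the multiple $t$-value is $t(k_1,\ldots,k_m)=\sum_{1\leq n_1<n_2<\cdots<n_m}\frac{1}{(2n_1-1)^{k_1}\cdots(2n_m-1)^{k_m}}$; the empty $t$-value ($m=0$) is $1$. $\zeta$ is the Riemann zeta function. Binomial coefficients $\binom{a}{b}$ with $b>a$ are $0$. *)

theory Defs
  imports "HOL-Analysis.Analysis"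
begin

definition mtv :: "nat list \<Rightarrow> real" where
  "mtv ks = infsum (\<lambda>ns. \<Prod>i<length ks. 1 / (2 * real (ns ! i) - 1) ^ (ks ! i))
     {ns. length ns = length ks \<and> sorted_wrt (<) ns \<and> (\<forall>n\<in>set ns. 1 \<le> n)}"

definition zeta_nat :: "nat \<Rightarrow> real" where
  "zeta_nat s = (\<Sum>n. 1 / real (Suc n) ^ s)"

definition d_coeff :: "nat \<Rightarrow> nat \<Rightarrow> real" where
  "d_coeff r k = real ((2*k) choose (2*r+1)) + (1 - 1 / 2^(2*k)) * (2 * real k)"

end

theory Submission
  imports Defs "HOL-Real_Asymp.Real_Asymp"
begin

text \<open>
  Write \<open>t_N\<close> for a multiple \<open>t\<close>-value with all indices \<open>n \<le> N\<close>. Then \<open>t_N(2,...,2)\<close>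
  with \<open>j\<close> twos is the \<open>j\<close>-th elementary symmetric function of \<open>1/1^2, 1/3^2, ..., 1/(2N-1)^2\<close>,
  and \<open>t_(N+1)(2,...,2,3) = t_N(2,...,2,3) + t_N(2,...,2) / (2N+1)^3\<close>. We construct numbers
  \<open>\<rho>_N(k)\<close> with
    \<open>\<rho>_(N+1)(0) = \<rho>_N(0) - 1/(2N+1)^3\<close>  and  \<open>\<rho>_(N+1)(k+1) = \<rho>_N(k+1) + \<rho>_(N+1)(k) / (2N+1)^2\<close>;
  these recursions are exactly what makes
    \<open>(-1)^r t_N(2,...,2,3) = \<rho>_0(r) - (\<Sum>j\<le>r. (-1)^j t_N(2,...,2) \<rho>_N(r-j))\<close>
  (with \<open>j\<close> twos inside the sum) hold for all \<open>N\<close> by induction.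

  The number \<open>\<rho>_N(k)\<close> is \<open>-2 \<Sum>m\<ge>1. f'(2m)\<close> for
    \<open>f(y) = y^(-2k-2) \<Prod>j\<le>N. (2j-1)^2 / ((2j-1)^2 - y^2)\<close>.
  For \<open>N = 0\<close> it is a multiple of \<open>\<zeta>(2k+3)\<close>. As \<open>N \<rightarrow> \<infinity>\<close> the product at \<open>y = 2m\<close> tends
  to \<open>(-1)^m\<close>, so \<open>\<rho>_N(k)\<close> tends to a multiple of \<open>\<Sum>m. (-1)^m / m^(2k+3)\<close>, again a multiple
  of \<open>\<zeta>(2k+3)\<close>. Letting \<open>N \<rightarrow> \<infinity>\<close> in the identity gives the theorem. The recursion for
  \<open>\<rho>_N(0)\<close> rests on a telescoping series: if \<open>g\<close> is the change of \<open>f\<close> (for \<open>k = 0\<close>) from \<open>N\<close>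
  to \<open>N+1\<close>, then \<open>g'\<close> has an explicit rational antidifference along the even integers.
\<close>

section \<open>Sums of inverse powers\<close>

lemma zeta_nat_sums: "s \<ge> 2 \<Longrightarrow> (\<lambda>n. 1 / real (Suc n) ^ s) sums zeta_nat s"
proof -
  assume "s \<ge> 2"
  then have "summable (\<lambda>n. inverse (real n ^ s))" by (rule inverse_power_summable)
  then have "summable (\<lambda>n. inverse (real (Suc n) ^ s))" by (subst summable_Suc_iff)
  then show ?thesis unfolding zeta_nat_def by (simp add: summable_sums divide_inverse)
qed

lemma sum_block_2: "sum f {n * 2..<n * 2 + 2} = f (2 * n) + f (2 * n + 1)" for n :: nat
proof -
  have "{n * 2..<n * 2 + 2} = {2 * n, 2 * n + 1}" by auto
  then show ?thesis by simp
qed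

lemma inverse_power_Suc_double: "1 / real (Suc (2 * n + 1)) ^ s = 1 / 2 ^ s * (1 / real (Suc n) ^ s)"
proof -
  have "real (Suc (2 * n + 1)) = 2 * real (Suc n)" by simp
  then show ?thesis by (simp only: power_mult_distrib) simp
qed

lemma sums_odd_inverse_powers:
  assumes "s \<ge> 2"
  shows "(\<lambda>j. 1 / (2 * real j + 1) ^ s) sums ((1 - 1 / 2 ^ s) * zeta_nat s)"
proof -
  have "(\<lambda>n. 1 / (2 * real n + 1) ^ s + 1 / 2 ^ s * (1 / real (Suc n) ^ s)) sums zeta_nat s"
    using sums_group[OF zeta_nat_sums[OF assms], of 2]
    by (simp only: sum_block_2 inverse_power_Suc_double) (simp add: add.commute)
  from sums_diff[OF this sums_mult[OF zeta_nat_sums[OF assms], of "1 / 2 ^ s"]]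
  show ?thesis by (simp add: left_diff_distrib)
qed

lemma sums_alternating_inverse_powers:
  assumes "s \<ge> 2"
  shows "(\<lambda>n. (-1) ^ n / real (Suc n) ^ s) sums ((1 - 2 / 2 ^ s) * zeta_nat s)"
proof -
  have "summable (\<lambda>n. norm ((-1) ^ n / real (Suc n) ^ s))"
    using zeta_nat_sums[OF assms] by (simp add: sums_iff)
  then have alt: "(\<lambda>n. (-1) ^ n / real (Suc n) ^ s) sums (\<Sum>n. (-1) ^ n / real (Suc n) ^ s)"
    by (rule summable_sums[OF summable_norm_cancel])
  have "(-1) ^ (2 * n) / real (Suc (2 * n)) ^ s + (-1) ^ (2 * n + 1) / real (Suc (2 * n + 1)) ^ s
      = 1 / (2 * real n + 1) ^ s - 1 / 2 ^ s * (1 / real (Suc n) ^ s)" for n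
    using inverse_power_Suc_double[of n s] by (simp add: add.commute)
  then have grouped: "(\<lambda>n. 1 / (2 * real n + 1) ^ s - 1 / 2 ^ s * (1 / real (Suc n) ^ s))
      sums (\<Sum>n. (-1) ^ n / real (Suc n) ^ s)"
    using sums_group[OF alt, of 2] by (simp only: sum_block_2)
  have "(\<lambda>n. 1 / (2 * real n + 1) ^ s - 1 / 2 ^ s * (1 / real (Suc n) ^ s))
      sums ((1 - 1 / 2 ^ s) * zeta_nat s - 1 / 2 ^ s * zeta_nat s)"
    using assms by (intro sums_diff sums_mult sums_odd_inverse_powers zeta_nat_sums)
  moreover have "(1 - 1 / 2 ^ s) * zeta_nat s - 1 / 2 ^ s * zeta_nat s = (1 - 2 / 2 ^ s) * zeta_nat s"
    by (simp add: algebra_simps)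
  ultimately show ?thesis
    using alt sums_unique2[OF grouped] by simp
qed

lemma summable_inverse_Suc_sq: "summable (\<lambda>i. C / real (Suc i) ^ 2)"
  using summable_mult[OF sums_summable[OF zeta_nat_sums[of 2]], of C] by simp

section \<open>The polynomial with roots at the odd integers\<close>

lemma odd_real_neq_0: "2 * real_of_int k + 1 \<noteq> 0"
proof
  assume "2 * real_of_int k + 1 = 0"
  then have "real_of_int (2 * k + 1) = 0" by simp
  then show False by presburger
qed

lemma abs_inverse_odd_real_le_1: "\<bar>1 / (2 * real_of_int k + 1)\<bar> \<le> 1"
proof -
  have "\<bar>2 * k + 1\<bar> \<ge> 1" by presburger
  then have "\<bar>2 * real_of_int k + 1\<bar> \<ge> 1" by linarith
  then show ?thesis by (simp add: abs_div divide_le_eq_1)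
qed

definition odd_sq :: "nat \<Rightarrow> real" where
  "odd_sq j = (2 * real j - 1)^2"

definition even_sq :: "nat \<Rightarrow> real" where
  "even_sq m = (2 * real m)^2"

lemma even_sq_neq_odd_sq: "even_sq m \<noteq> odd_sq j"
proof
  assume "even_sq m = odd_sq j"
  then have "(2 * real m - (2 * real j - 1)) * (2 * real m + (2 * real j - 1)) = 0"
    by (simp add: even_sq_def odd_sq_def algebra_simps power2_eq_square)
  moreover have "2 * real m - (2 * real j - 1) = 2 * real_of_int (int m - int j) + 1"
    and "2 * real m + (2 * real j - 1) = 2 * real_of_int (int m + int j - 1) + 1" by simp_all
  ultimately show False using odd_real_neq_0 by (metis mult_eq_0_iff)
qed

lemma odd_sq_pos: "j \<ge> 1 \<Longrightarrow> odd_sq j > 0"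
  by (simp add: odd_sq_def)

lemma even_sq_ge_4: "m \<ge> 1 \<Longrightarrow> even_sq m \<ge> 4"
  by (simp add: even_sq_def)

definition odd_poly :: "nat \<Rightarrow> real \<Rightarrow> real" where
  "odd_poly n y = (\<Prod>j=1..n. y^2 - odd_sq j)"

definition odd_poly_logderiv :: "nat \<Rightarrow> real \<Rightarrow> real" where
  "odd_poly_logderiv n y = (\<Sum>j=1..n. 1 / (y - (2 * real j - 1)) + 1 / (y + (2 * real j - 1)))"

lemma odd_poly_0 [simp]: "odd_poly 0 y = 1"
  by (simp add: odd_poly_def)

lemma odd_poly_Suc: "odd_poly (Suc n) y = odd_poly n y * (y^2 - odd_sq (Suc n))"
  by (simp add: odd_poly_def prod.nat_ivl_Suc')

lemma odd_poly_logderiv_0 [simp]: "odd_poly_logderiv 0 y = 0"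
  by (simp add: odd_poly_logderiv_def)

lemma odd_poly_logderiv_Suc:
  "odd_poly_logderiv (Suc n) y =
     odd_poly_logderiv n y + 1 / (y - (2 * real (Suc n) - 1)) + 1 / (y + (2 * real (Suc n) - 1))"
  by (simp add: odd_poly_logderiv_def sum.nat_ivl_Suc')

lemma odd_poly_logderiv_at_0 [simp]: "odd_poly_logderiv n 0 = 0"
proof -
  have term_0: "1 / (0 - (2 * real j - 1)) + 1 / (0 + (2 * real j - 1)) = 0" for j
    by (simp only: diff_0 minus_divide_right[symmetric]) simp
  show ?thesis by (simp only: odd_poly_logderiv_def term_0 sum.neutral_const)
qed

lemma odd_poly_shift: "odd_poly n (y + 2) * (y + 1 - 2 * real n) = odd_poly n y * (y + 1 + 2 * real n)"
proof (induction n)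
  case (Suc n)
  have "odd_poly (Suc n) (y + 2) * (y + 1 - 2 * real (Suc n))
      = odd_poly n (y + 2) * (y + 1 - 2 * real n) * ((y + 3 + 2 * real n) * (y - 1 - 2 * real n))"
    by (simp add: odd_poly_Suc odd_sq_def algebra_simps power2_eq_square)
  also have "\<dots> = odd_poly (Suc n) y * (y + 1 + 2 * real (Suc n))"
    unfolding Suc by (simp add: odd_poly_Suc odd_sq_def algebra_simps power2_eq_square)
  finally show ?case .
qed simp

lemma odd_poly_logderiv_shift:
  "odd_poly_logderiv n (y + 2) = odd_poly_logderiv n y - 1 / (y + 1 - 2 * real n) + 1 / (y + 1 + 2 * real n)"
proof (induction n)
  case (Suc n)
  have "y + 2 - (2 * real (Suc n) - 1) = y + 1 - 2 * real n"
    and "y + 2 + (2 * real (Suc n) - 1) = y + 3 + 2 * real n"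
    and "y - (2 * real (Suc n) - 1) = y + 1 - 2 * real (Suc n)"
    and "y + (2 * real (Suc n) - 1) = y + 1 + 2 * real n"
    and "y + 1 + 2 * real (Suc n) = y + 3 + 2 * real n" by simp_all
  note shifted = this
  show ?case unfolding odd_poly_logderiv_Suc shifted Suc by simp
qed simp

lemma odd_poly_even_neq_0: "odd_poly n (2 * real m) \<noteq> 0"
  using even_sq_neq_odd_sq by (simp add: odd_poly_def even_sq_def)

lemma odd_poly_at_0_neq_0: "odd_poly n 0 \<noteq> 0"
  using odd_poly_even_neq_0[of n 0] by simp

lemma odd_poly_even_eq:
  "odd_poly n (2 * real m) =
     odd_poly n 0 * (\<Prod>i<m. (2 * real i + 1 + 2 * real n) / (2 * real i + 1 - 2 * real n))"
proof (induction m)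
  case (Suc m)
  have "2 * real m + 1 - 2 * real n = 2 * real_of_int (int m - int n) + 1" by simp
  then have "2 * real m + 1 - 2 * real n \<noteq> 0" using odd_real_neq_0 by metis
  then have "odd_poly n (2 * real m + 2)
      = odd_poly n (2 * real m) * (2 * real m + 1 + 2 * real n) / (2 * real m + 1 - 2 * real n)"
    using odd_poly_shift[of n "2 * real m"] by (simp add: field_simps)
  then show ?case using Suc by (simp add: add.commute)
qed simp

lemma odd_poly_logderiv_even_eq:
  "odd_poly_logderiv n (2 * real m) =
     (\<Sum>i<m. 1 / (2 * real i + 1 + 2 * real n) - 1 / (2 * real i + 1 - 2 * real n))"
proof (induction m)
  case (Suc m)
  show ?case
    using odd_poly_logderiv_shift[of n "2 * real m"] Suc by (simp add: add.commute)
qed simp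

lemma abs_odd_poly_at_0_le: "\<bar>odd_poly n 0\<bar> \<le> \<bar>odd_poly n (2 * real m)\<bar>"
proof -
  have "1 \<le> (\<Prod>i<m. \<bar>(2 * real i + 1 + 2 * real n) / (2 * real i + 1 - 2 * real n)\<bar>)"
  proof (rule prod_ge_1)
    fix i
    have "2 * real i + 1 - 2 * real n = 2 * real_of_int (int i - int n) + 1" by simp
    then have "2 * real i + 1 - 2 * real n \<noteq> 0" using odd_real_neq_0 by metis
    then show "1 \<le> \<bar>(2 * real i + 1 + 2 * real n) / (2 * real i + 1 - 2 * real n)\<bar>"
      by (simp add: abs_div le_divide_eq_1)
  qed
  then show ?thesis
    by (simp add: odd_poly_even_eq abs_mult abs_prod mult_le_cancel_left1)
qed

lemma abs_odd_poly_logderiv_even_le_m: "\<bar>odd_poly_logderiv n (2 * real m)\<bar> \<le> 2 * real m"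
proof -
  have "\<bar>odd_poly_logderiv n (2 * real m)\<bar>
      \<le> (\<Sum>i<m. \<bar>1 / (2 * real i + 1 + 2 * real n) - 1 / (2 * real i + 1 - 2 * real n)\<bar>)"
    unfolding odd_poly_logderiv_even_eq by (rule sum_abs)
  also have "\<dots> \<le> (\<Sum>i<m. 2)"
  proof (rule sum_mono)
    fix i
    have "2 * real i + 1 + 2 * real n = 2 * real_of_int (int i + int n) + 1"
      and "2 * real i + 1 - 2 * real n = 2 * real_of_int (int i - int n) + 1" by simp_all
    then have "\<bar>1 / (2 * real i + 1 + 2 * real n)\<bar> \<le> 1" "\<bar>1 / (2 * real i + 1 - 2 * real n)\<bar> \<le> 1"
      using abs_inverse_odd_real_le_1 by metis+
    then show "\<bar>1 / (2 * real i + 1 + 2 * real n) - 1 / (2 * real i + 1 - 2 * real n)\<bar> \<le> 2"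
      by linarith
  qed
  finally show ?thesis by simp
qed

lemma abs_odd_poly_logderiv_even_le_n: "\<bar>odd_poly_logderiv n (2 * real m)\<bar> \<le> 2 * real n"
proof -
  have "\<bar>odd_poly_logderiv n (2 * real m)\<bar>
      \<le> (\<Sum>j=1..n. \<bar>1 / (2 * real m - (2 * real j - 1)) + 1 / (2 * real m + (2 * real j - 1))\<bar>)"
    unfolding odd_poly_logderiv_def by (rule sum_abs)
  also have "\<dots> \<le> (\<Sum>j=1..n. 2)"
  proof (rule sum_mono)
    fix j
    have "2 * real m - (2 * real j - 1) = 2 * real_of_int (int m - int j) + 1"
      and "2 * real m + (2 * real j - 1) = 2 * real_of_int (int m + int j - 1) + 1" by simp_all
    then have "\<bar>1 / (2 * real m - (2 * real j - 1))\<bar> \<le> 1" "\<bar>1 / (2 * real m + (2 * real j - 1))\<bar> \<le> 1"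
      using abs_inverse_odd_real_le_1 by metis+
    then show "\<bar>1 / (2 * real m - (2 * real j - 1)) + 1 / (2 * real m + (2 * real j - 1))\<bar> \<le> 2"
      by linarith
  qed
  finally show ?thesis by simp
qed

lemma odd_poly_ge:
  assumes "n \<ge> 1" "y \<ge> 2 * real n"
  shows "odd_poly n y \<ge> y^2 - 1"
  using assms
proof (induction n)
  case (Suc n)
  have "(2 * real n + 2)^2 \<le> y^2"
    using Suc.prems by (intro power_mono) auto
  moreover have "1 \<le> (2 * real n + 2)^2" by simp
  ultimately have "y^2 \<ge> 1" by linarith
  have factor: "y^2 - odd_sq (Suc n) \<ge> 1"
    using \<open>(2 * real n + 2)^2 \<le> y^2\<close> by (simp add: odd_sq_def power2_eq_square algebra_simps)
  show ?case
  proof (cases "n = 0")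
    case False
    then have "odd_poly n y \<ge> y^2 - 1" using Suc by simp
    then have "(y^2 - 1) * 1 \<le> odd_poly n y * (y^2 - odd_sq (Suc n))"
      using factor \<open>y^2 \<ge> 1\<close> by (intro mult_mono) auto
    then show ?thesis by (simp add: odd_poly_Suc)
  qed (simp add: odd_poly_Suc odd_sq_def)
qed simp

text \<open>The series in \<open>sums_odd_poly_logderiv_quot\<close> telescopes against this antidifference, leaving
  its value at \<open>0\<close>, where the logarithmic derivative vanishes.\<close>

definition odd_poly_antidiff :: "nat \<Rightarrow> real \<Rightarrow> real" where
  "odd_poly_antidiff n y =
     ((y + (2 * real n - 1)) * odd_poly_logderiv n y - 1) / (2 * (2 * real n - 1) * odd_poly n y)"

lemma odd_poly_antidiff_diff:
  assumes "n \<ge> 1"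
  shows "odd_poly_antidiff n (2 * real m) - odd_poly_antidiff n (2 * real (Suc m))
       = odd_poly_logderiv n (2 * real m) / odd_poly n (2 * real m)"
proof -
  define y where "y = 2 * real m"
  define a where "a = 2 * real n - 1"
  define p where "p = y + 1 - 2 * real n"
  define q where "q = y + 1 + 2 * real n"
  define D where "D = odd_poly n y"
  define S where "S = odd_poly_logderiv n y"
  have "a \<noteq> 0" using assms by (simp add: a_def)
  have "p = 2 * real_of_int (int m - int n) + 1" "q = 2 * real_of_int (int m + int n) + 1"
    by (simp_all add: p_def q_def y_def)
  then have "p \<noteq> 0" "q \<noteq> 0" using odd_real_neq_0 by metis+
  have "D \<noteq> 0" using odd_poly_even_neq_0 by (simp add: D_def y_def)
  have shift_D: "odd_poly n (y + 2) = D * q / p"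
    using odd_poly_shift[of n y] \<open>p \<noteq> 0\<close> by (simp add: D_def p_def q_def field_simps)
  have shift_S: "odd_poly_logderiv n (y + 2) = S - 1 / p + 1 / q"
    using odd_poly_logderiv_shift[of n y] by (simp add: S_def p_def q_def)
  have "q * (S - 1 / p + 1 / q) - 1 = q * (p * S - 1) / p"
    using \<open>p \<noteq> 0\<close> \<open>q \<noteq> 0\<close> by (simp add: field_simps)
  moreover have "y + 2 + a = q" by (simp add: a_def q_def)
  ultimately have "odd_poly_antidiff n (y + 2) = (q * (p * S - 1) / p) / (2 * a * (D * q / p))"
    unfolding odd_poly_antidiff_def shift_D shift_S a_def[symmetric] by simp
  also have "\<dots> = (p * S - 1) / (2 * a * D)"
    using \<open>p \<noteq> 0\<close> \<open>q \<noteq> 0\<close> by simp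
  finally have "odd_poly_antidiff n (y + 2) = (p * S - 1) / (2 * a * D)" .
  moreover have "odd_poly_antidiff n y = ((p * S - 1) + 2 * a * S) / (2 * a * D)"
    unfolding odd_poly_antidiff_def a_def[symmetric] D_def[symmetric] S_def[symmetric]
    by (simp add: a_def p_def algebra_simps)
  moreover have "y + 2 = 2 * real (Suc m)" by (simp add: y_def)
  ultimately show ?thesis
    using \<open>D \<noteq> 0\<close> \<open>a \<noteq> 0\<close> unfolding y_def[symmetric] D_def[symmetric] S_def[symmetric]
    by (simp add: add_divide_distrib)
qed

lemma odd_poly_antidiff_tendsto_0:
  assumes "n \<ge> 1"
  shows "(\<lambda>m. odd_poly_antidiff n (2 * real m)) \<longlonglongrightarrow> 0"
proof (rule Lim_null_comparison)
  define a where "a = 2 * real n - 1"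
  have "a \<ge> 1" using assms by (simp add: a_def)
  show "((\<lambda>m. ((2 * real m + a) * (2 * real n) + 1) / (2 * a * ((2 * real m)^2 - 1))) \<longlongrightarrow> 0) sequentially"
    using \<open>a \<ge> 1\<close> by real_asymp
  show "\<forall>\<^sub>F m in sequentially.
      norm (odd_poly_antidiff n (2 * real m)) \<le> ((2 * real m + a) * (2 * real n) + 1) / (2 * a * ((2 * real m)^2 - 1))"
    using eventually_ge_at_top[of "n + 1"]
  proof eventually_elim
    case (elim m)
    define y where "y = 2 * real m"
    have "y \<ge> 2 * real n" "y \<ge> 2" using elim assms by (simp_all add: y_def)
    then have "y^2 - 1 > 0" using power_mono[of 2 y 2] by simp
    have D: "odd_poly n y \<ge> y^2 - 1" using odd_poly_ge[OF assms \<open>y \<ge> 2 * real n\<close>] .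
    have "\<bar>(y + a) * odd_poly_logderiv n y\<bar> \<le> (y + a) * (2 * real n)"
      using abs_odd_poly_logderiv_even_le_n[of n m] \<open>y \<ge> 2\<close> \<open>a \<ge> 1\<close>
      by (simp add: y_def abs_mult mult_left_mono)
    then have num: "\<bar>(y + a) * odd_poly_logderiv n y - 1\<bar> \<le> (y + a) * (2 * real n) + 1" by linarith
    have "norm (odd_poly_antidiff n y) = \<bar>(y + a) * odd_poly_logderiv n y - 1\<bar> / (2 * a * odd_poly n y)"
      unfolding odd_poly_antidiff_def a_def[symmetric] using D \<open>y^2 - 1 > 0\<close> \<open>a \<ge> 1\<close>
      by (simp add: abs_div abs_mult)
    also have "\<dots> \<le> ((y + a) * (2 * real n) + 1) / (2 * a * (y^2 - 1))"
      using num D \<open>y^2 - 1 > 0\<close> \<open>a \<ge> 1\<close> by (intro frac_le) auto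
    finally show ?case unfolding y_def .
  qed
qed

lemma sums_odd_poly_logderiv_quot:
  "(\<lambda>i. 2 * odd_poly n 0 * odd_poly_logderiv (Suc n) (2 * real (Suc i)) / odd_poly (Suc n) (2 * real (Suc i)))
     sums (1 / (2 * real n + 1)^3)"
proof -
  have "(\<lambda>i. odd_poly_antidiff (Suc n) (2 * real (Suc i)) - odd_poly_antidiff (Suc n) (2 * real (Suc (Suc i))))
      sums (odd_poly_antidiff (Suc n) (2 * real (Suc 0)) - 0)"
    using LIMSEQ_Suc[OF odd_poly_antidiff_tendsto_0] by (intro telescope_sums') simp
  moreover have "odd_poly_antidiff (Suc n) (2 * real (Suc 0)) = odd_poly_antidiff (Suc n) 0"
    using odd_poly_antidiff_diff[of "Suc n" 0] by simp
  moreover have "odd_poly_antidiff (Suc n) (2 * real (Suc i)) - odd_poly_antidiff (Suc n) (2 * real (Suc (Suc i)))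
      = odd_poly_logderiv (Suc n) (2 * real (Suc i)) / odd_poly (Suc n) (2 * real (Suc i))" for i
    by (rule odd_poly_antidiff_diff) simp
  ultimately have "(\<lambda>i. odd_poly_logderiv (Suc n) (2 * real (Suc i)) / odd_poly (Suc n) (2 * real (Suc i)))
      sums (odd_poly_antidiff (Suc n) 0)"
    by simp
  then have "(\<lambda>i. 2 * odd_poly n 0 * (odd_poly_logderiv (Suc n) (2 * real (Suc i)) / odd_poly (Suc n) (2 * real (Suc i))))
      sums (2 * odd_poly n 0 * odd_poly_antidiff (Suc n) 0)"
    by (rule sums_mult)
  moreover have "2 * odd_poly n 0 * odd_poly_antidiff (Suc n) 0 = 1 / (2 * real n + 1)^3"
  proof -
    define a where "a = 2 * real n + 1"
    define d where "d = odd_poly n 0"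
    have "a \<noteq> 0" "d \<noteq> 0" using odd_poly_at_0_neq_0 by (simp_all add: a_def d_def)
    have "odd_poly_antidiff (Suc n) 0 = - 1 / (2 * a * (d * (0 - a^2)))"
      by (simp add: odd_poly_antidiff_def odd_poly_Suc odd_sq_def a_def d_def algebra_simps)
    then show ?thesis
      using \<open>a \<noteq> 0\<close> \<open>d \<noteq> 0\<close> by (simp add: a_def[symmetric] d_def[symmetric] power2_eq_square power3_eq_cube)
  qed
  ultimately show ?thesis by (simp add: mult.assoc)
qed

section \<open>The double series \<open>rho\<close>\<close>

text \<open>With \<open>f(y) = y^(-2k-2) * (\<Prod>j=1..N. odd_sq j / (odd_sq j - y^2))\<close> one has
  \<open>odd_poly_quot N m = y^(2k+2) * f(y)\<close> and \<open>rho_term N k m = -2 * f'(y)\<close> at \<open>y = 2 * m\<close>.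
  Passing from \<open>N\<close> to \<open>N + 1\<close> multiplies \<open>f\<close> by \<open>u / (u - y^2)\<close> with \<open>u = odd_sq (N + 1)\<close>, which
  gives the recursions in \<open>N\<close> below.\<close>

definition odd_poly_quot :: "nat \<Rightarrow> nat \<Rightarrow> real" where
  "odd_poly_quot N m = odd_poly N 0 / odd_poly N (2 * real m)"

definition inv_gap_sum :: "nat \<Rightarrow> nat \<Rightarrow> real" where
  "inv_gap_sum N m = (\<Sum>j=1..N. 1 / (even_sq m - odd_sq j))"

definition rho_term :: "nat \<Rightarrow> nat \<Rightarrow> nat \<Rightarrow> real" where
  "rho_term N k m = 8 * real m * odd_poly_quot N m *
     (inv_gap_sum N m / even_sq m ^ (k + 1) + real (k + 1) / even_sq m ^ (k + 2))"

definition rho :: "nat \<Rightarrow> nat \<Rightarrow> real" where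
  "rho N k = (\<Sum>i. rho_term N k (Suc i))"

lemma odd_poly_quot_Suc:
  "odd_poly_quot (Suc N) m = odd_poly_quot N m * odd_sq (Suc N) / (odd_sq (Suc N) - even_sq m)"
  using odd_poly_even_neq_0[of N m] even_sq_neq_odd_sq[of m "Suc N"]
  by (simp add: odd_poly_quot_def odd_poly_Suc even_sq_def field_simps)

lemma inv_gap_sum_Suc: "inv_gap_sum (Suc N) m = inv_gap_sum N m + 1 / (even_sq m - odd_sq (Suc N))"
  by (simp add: inv_gap_sum_def sum.nat_ivl_Suc')

lemma inv_gap_sum_eq_logderiv:
  assumes "m \<ge> 1"
  shows "inv_gap_sum N m = odd_poly_logderiv N (2 * real m) / (4 * real m)"
proof -
  have "1 / (even_sq m - odd_sq j)
      = (1 / (2 * real m - (2 * real j - 1)) + 1 / (2 * real m + (2 * real j - 1))) / (4 * real m)" for j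
  proof -
    define A where "A = 2 * real m - (2 * real j - 1)"
    define B where "B = 2 * real m + (2 * real j - 1)"
    have "A = 2 * real_of_int (int m - int j) + 1" "B = 2 * real_of_int (int m + int j - 1) + 1"
      by (simp_all add: A_def B_def)
    then have "A \<noteq> 0" "B \<noteq> 0" using odd_real_neq_0 by metis+
    moreover have "even_sq m - odd_sq j = A * B" "A + B = 4 * real m"
      by (simp_all add: A_def B_def even_sq_def odd_sq_def algebra_simps power2_eq_square)
    ultimately show ?thesis
      unfolding A_def[symmetric] B_def[symmetric] using assms by (simp add: field_simps)
  qed
  then show ?thesis
    by (simp add: inv_gap_sum_def odd_poly_logderiv_def sum_divide_distrib)
qed

lemma rho_term_Suc_0:
  assumes "m \<ge> 1"
  shows "rho_term (Suc N) 0 m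
       = rho_term N 0 m - 2 * odd_poly N 0 * odd_poly_logderiv (Suc N) (2 * real m) / odd_poly (Suc N) (2 * real m)"
proof -
  define c where "c = even_sq m"
  define d where "d = odd_sq (Suc N) - c"
  define E where "E = odd_poly_quot N m"
  define S where "S = inv_gap_sum N m"
  have "d \<noteq> 0" "c \<noteq> 0" "odd_poly N (2 * real m) \<noteq> 0"
    using even_sq_neq_odd_sq[of m "Suc N"] even_sq_ge_4[OF assms] odd_poly_even_neq_0
    by (auto simp: c_def d_def)
  have quot: "odd_poly_quot (Suc N) m = E * (c + d) / d"
    by (simp add: odd_poly_quot_Suc E_def c_def d_def)
  have gap: "inv_gap_sum (Suc N) m = S - 1 / d"
    unfolding inv_gap_sum_Suc S_def c_def d_def by (metis minus_diff_eq divide_minus_right diff_minus_eq_add)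
  have "odd_poly (Suc N) (2 * real m) = - odd_poly N (2 * real m) * d"
    by (simp add: odd_poly_Suc c_def d_def even_sq_def algebra_simps)
  moreover have "odd_poly_logderiv (Suc N) (2 * real m) = 4 * real m * (S - 1 / d)"
    using inv_gap_sum_eq_logderiv[OF assms, of "Suc N"] assms gap by simp
  ultimately have logquot: "2 * odd_poly N 0 * odd_poly_logderiv (Suc N) (2 * real m) / odd_poly (Suc N) (2 * real m)
      = - 8 * real m * E * (S - 1 / d) / d"
    by (simp add: E_def odd_poly_quot_def)
  have pow: "c ^ (0 + 1) = c" "c ^ (0 + 2) = c * c" "real (0 + 1) = 1"
    by (simp_all add: power2_eq_square)
  have identity: "8 * real m * (E * (c + d) / d) * ((S - 1 / d) / c + 1 / (c * c))
      = 8 * real m * E * (S / c + 1 / (c * c)) - - 8 * real m * E * (S - 1 / d) / d"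
    using \<open>d \<noteq> 0\<close> \<open>c \<noteq> 0\<close> by (simp add: divide_simps) algebra
  show ?thesis
    unfolding rho_term_def quot gap E_def[symmetric] S_def[symmetric] c_def[symmetric] logquot pow
    by (rule identity)
qed

lemma rho_term_Suc_Suc:
  assumes "m \<ge> 1"
  shows "rho_term (Suc N) (Suc k) m = rho_term N (Suc k) m + rho_term (Suc N) k m / odd_sq (Suc N)"
proof -
  define c where "c = even_sq m"
  define d where "d = odd_sq (Suc N) - c"
  define E where "E = odd_poly_quot N m"
  define S where "S = inv_gap_sum N m"
  define P where "P = c ^ (k + 1)"
  have "d \<noteq> 0" "c \<noteq> 0" "c + d \<noteq> 0" "P \<noteq> 0"
    using even_sq_neq_odd_sq[of m "Suc N"] even_sq_ge_4[OF assms] odd_sq_pos[of "Suc N"]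
    by (auto simp: c_def d_def P_def)
  have quot: "odd_poly_quot (Suc N) m = E * (c + d) / d"
    by (simp add: odd_poly_quot_Suc E_def c_def d_def)
  have gap: "inv_gap_sum (Suc N) m = S - 1 / d"
    unfolding inv_gap_sum_Suc S_def c_def d_def by (metis minus_diff_eq divide_minus_right diff_minus_eq_add)
  have pow: "c ^ (Suc k + 1) = P * c" "c ^ (Suc k + 2) = P * c * c" "c ^ (k + 2) = P * c" "c ^ (k + 1) = P"
    by (simp_all add: P_def)
  have coeff: "real (Suc k + 1) = real k + 2" "real (k + 1) = real k + 1" by simp_all
  have "odd_sq (Suc N) = c + d" by (simp add: d_def)
  have identity: "8 * real m * (E * (c + d) / d) * ((S - 1 / d) / (P * c) + (real k + 2) / (P * c * c))
      = 8 * real m * E * (S / (P * c) + (real k + 2) / (P * c * c))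
        + 8 * real m * (E * (c + d) / d) * ((S - 1 / d) / P + (real k + 1) / (P * c)) / (c + d)"
    using \<open>d \<noteq> 0\<close> \<open>c \<noteq> 0\<close> \<open>c + d \<noteq> 0\<close> \<open>P \<noteq> 0\<close> by (simp add: divide_simps) algebra
  show ?thesis
    unfolding rho_term_def quot gap E_def[symmetric] S_def[symmetric] c_def[symmetric] pow coeff
      \<open>odd_sq (Suc N) = c + d\<close>
    by (rule identity)
qed

lemma abs_odd_poly_quot_le_1: "\<bar>odd_poly_quot N m\<bar> \<le> 1"
  using abs_odd_poly_at_0_le[of N m] odd_poly_even_neq_0[of N m]
  by (simp add: odd_poly_quot_def abs_div divide_le_eq_1)

lemma abs_inv_gap_sum_le_half: "m \<ge> 1 \<Longrightarrow> \<bar>inv_gap_sum N m\<bar> \<le> 1 / 2"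
  using abs_odd_poly_logderiv_even_le_m[of N m]
  by (simp add: inv_gap_sum_eq_logderiv abs_div divide_le_eq)

lemma abs_inv_gap_sum_le: "m \<ge> 1 \<Longrightarrow> \<bar>inv_gap_sum N m\<bar> \<le> real N / (2 * real m)"
  using abs_odd_poly_logderiv_even_le_n[of N m]
  by (simp add: inv_gap_sum_eq_logderiv abs_div field_simps)

lemma abs_rho_term_le:
  assumes "m \<ge> 1" "\<bar>inv_gap_sum N m\<bar> \<le> B" "j \<le> k + 1"
  shows "\<bar>rho_term N k m\<bar> \<le> 8 * real m * (B / even_sq m ^ j + real (k + 1) / even_sq m ^ 2)"
proof -
  define c where "c = even_sq m"
  define S where "S = inv_gap_sum N m"
  have "c \<ge> 1" using even_sq_ge_4[OF assms(1)] by (simp add: c_def)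
  then have "c ^ j \<le> c ^ (k + 1)" "c ^ 2 \<le> c ^ (k + 2)" "c ^ j > 0"
    using assms(3) by (auto intro: power_increasing simp del: power_Suc)
  moreover have "\<bar>S\<bar> \<le> B" using assms(2) by (simp add: S_def)
  ultimately have "\<bar>S\<bar> / c ^ (k + 1) \<le> B / c ^ j" by (simp add: frac_le)
  moreover have "real (k + 1) / c ^ (k + 2) \<le> real (k + 1) / c ^ 2"
    using \<open>c ^ 2 \<le> c ^ (k + 2)\<close> \<open>c \<ge> 1\<close> by (intro divide_left_mono mult_pos_pos) auto
  moreover have "\<bar>S / c ^ (k + 1) + real (k + 1) / c ^ (k + 2)\<bar> \<le> \<bar>S\<bar> / c ^ (k + 1) + real (k + 1) / c ^ (k + 2)"
    using abs_triangle_ineq[of "S / c ^ (k + 1)" "real (k + 1) / c ^ (k + 2)"] \<open>c \<ge> 1\<close>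
    by (simp add: abs_div)
  ultimately have bound: "\<bar>S / c ^ (k + 1) + real (k + 1) / c ^ (k + 2)\<bar> \<le> B / c ^ j + real (k + 1) / c ^ 2"
    by linarith
  have "\<bar>rho_term N k m\<bar> = 8 * real m * \<bar>odd_poly_quot N m\<bar> * \<bar>S / c ^ (k + 1) + real (k + 1) / c ^ (k + 2)\<bar>"
    by (simp add: rho_term_def abs_mult c_def S_def)
  also have "\<dots> \<le> 8 * real m * 1 * (B / c ^ j + real (k + 1) / c ^ 2)"
    using abs_odd_poly_quot_le_1 bound
    by (intro mult_mono) auto
  finally show ?thesis by (simp add: c_def)
qed

lemma abs_rho_term_le_N:
  assumes "m \<ge> 1"
  shows "\<bar>rho_term N k m\<bar> \<le> (real N + real k + 1) / real m ^ 2"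
proof -
  have "\<bar>rho_term N k m\<bar> \<le> 8 * real m * ((real N / (2 * real m)) / even_sq m ^ 1 + real (k + 1) / even_sq m ^ 2)"
    using assms abs_inv_gap_sum_le by (intro abs_rho_term_le) auto
  also have "\<dots> = real N / real m ^ 2 + (real k + 1) / (2 * real m ^ 3)"
    using assms by (simp add: even_sq_def field_simps power2_eq_square power3_eq_cube)
  also have "\<dots> \<le> real N / real m ^ 2 + (real k + 1) / real m ^ 2"
    using assms by (simp add: frac_le power2_eq_square power3_eq_cube)
  finally show ?thesis by (simp add: add_divide_distrib)
qed

lemma abs_rho_term_le_k:
  assumes "m \<ge> 1" "k \<ge> 1"
  shows "\<bar>rho_term N k m\<bar> \<le> (real k + 2) / real m ^ 2"
proof -
  have "\<bar>rho_term N k m\<bar> \<le> 8 * real m * ((1 / 2) / even_sq m ^ 2 + real (k + 1) / even_sq m ^ 2)"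
    using assms abs_inv_gap_sum_le_half by (intro abs_rho_term_le) auto
  also have "\<dots> = (real k + 3 / 2) / (2 * real m ^ 3)"
    using assms by (simp add: even_sq_def field_simps power2_eq_square power3_eq_cube)
  also have "\<dots> \<le> (real k + 2) / real m ^ 2"
    using assms by (intro frac_le) (auto simp: power2_eq_square power3_eq_cube)
  finally show ?thesis .
qed

lemma summable_rho_term: "summable (\<lambda>i. rho_term N k (Suc i))"
proof (rule summable_comparison_test'[OF summable_inverse_Suc_sq[of "real N + real k + 1"]])
  show "norm (rho_term N k (Suc i)) \<le> (real N + real k + 1) / real (Suc i) ^ 2" for i
    using abs_rho_term_le_N[of "Suc i" N k] by simp
qed

lemma rho_Suc_0: "rho (Suc N) 0 = rho N 0 - 1 / (2 * real N + 1)^3"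
proof -
  have "(\<lambda>i. rho_term N 0 (Suc i) - rho_term (Suc N) 0 (Suc i)) sums (rho N 0 - rho (Suc N) 0)"
    unfolding rho_def by (intro sums_diff summable_sums summable_rho_term)
  moreover have "rho_term N 0 (Suc i) - rho_term (Suc N) 0 (Suc i)
      = 2 * odd_poly N 0 * odd_poly_logderiv (Suc N) (2 * real (Suc i)) / odd_poly (Suc N) (2 * real (Suc i))" for i
    using rho_term_Suc_0[of "Suc i" N] by simp
  ultimately show ?thesis
    using sums_unique2[OF _ sums_odd_poly_logderiv_quot] by simp
qed

lemma rho_Suc_Suc: "rho (Suc N) (Suc k) = rho N (Suc k) + rho (Suc N) k / odd_sq (Suc N)"
proof -
  have "(\<lambda>i. rho_term N (Suc k) (Suc i) + rho_term (Suc N) k (Suc i) / odd_sq (Suc N))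
      sums (rho N (Suc k) + rho (Suc N) k / odd_sq (Suc N))"
    unfolding rho_def by (intro sums_add sums_divide summable_sums summable_rho_term)
  moreover have "rho_term (Suc N) (Suc k) (Suc i) = rho_term N (Suc k) (Suc i) + rho_term (Suc N) k (Suc i) / odd_sq (Suc N)" for i
    by (rule rho_term_Suc_Suc) simp
  ultimately show ?thesis
    unfolding rho_def by (simp add: sums_iff)
qed

lemma rho_N_0_eq: "rho N 0 = rho 0 0 - (\<Sum>j<N. 1 / (2 * real j + 1)^3)"
  by (induction N) (simp_all add: rho_Suc_0)

section \<open>Limits as \<open>N \<rightarrow> \<infinity>\<close>\<close>

lemma odd_poly_quot_tendsto: "(\<lambda>N. odd_poly_quot N m) \<longlonglongrightarrow> (-1) ^ m"
proof -
  have "(\<lambda>N. \<Prod>i<m. (2 * real i + 1 + 2 * real N) / (2 * real i + 1 - 2 * real N)) \<longlonglongrightarrow> (\<Prod>i<m. -1)"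
    by (intro tendsto_prod) real_asymp
  then have "(\<lambda>N. 1 / (\<Prod>i<m. (2 * real i + 1 + 2 * real N) / (2 * real i + 1 - 2 * real N))) \<longlonglongrightarrow> 1 / (-1) ^ m"
    by (intro tendsto_divide tendsto_const) auto
  then show ?thesis
    using odd_poly_at_0_neq_0 by (simp add: odd_poly_quot_def odd_poly_even_eq power_one_over[symmetric])
qed

lemma inv_gap_sum_tendsto_0:
  assumes "m \<ge> 1"
  shows "(\<lambda>N. inv_gap_sum N m) \<longlonglongrightarrow> 0"
proof -
  have "(\<lambda>N. \<Sum>i<m. 1 / (2 * real i + 1 + 2 * real N) - 1 / (2 * real i + 1 - 2 * real N)) \<longlonglongrightarrow> (\<Sum>i<m. 0)"
    by (intro tendsto_sum) real_asymp
  then show ?thesis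
    using assms by (simp add: inv_gap_sum_eq_logderiv odd_poly_logderiv_even_eq tendsto_divide_zero)
qed

lemma rho_term_tendsto:
  assumes "m \<ge> 1"
  shows "(\<lambda>N. rho_term N k m) \<longlonglongrightarrow> 8 * real m * (-1) ^ m * (real (k + 1) / even_sq m ^ (k + 2))"
proof -
  have "even_sq m ^ (k + 1) \<noteq> 0" "even_sq m ^ (k + 2) \<noteq> 0"
    using even_sq_ge_4[OF assms] by auto
  then have "(\<lambda>N. 8 * real m * odd_poly_quot N m * (inv_gap_sum N m / even_sq m ^ (k + 1) + real (k + 1) / even_sq m ^ (k + 2)))
      \<longlonglongrightarrow> 8 * real m * (-1) ^ m * (0 / even_sq m ^ (k + 1) + real (k + 1) / even_sq m ^ (k + 2))"
    by (intro tendsto_intros odd_poly_quot_tendsto inv_gap_sum_tendsto_0 assms)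
  then show ?thesis by (simp add: rho_term_def)
qed

lemma scaled_inverse_even_sq_power:
  assumes "m \<ge> 1"
  shows "8 * real m * (K / even_sq m ^ (k + 2)) = 2 * K / 4 ^ Suc k * (1 / real m ^ (2 * k + 3))"
proof -
  have "even_sq m ^ (k + 2) = 4 ^ (k + 2) * real m ^ (2 * (k + 2))"
    by (simp only: even_sq_def power_mult_distrib power_mult) simp
  also have "\<dots> = 4 * 4 ^ Suc k * (real m * real m ^ (2 * k + 3))"
    using power_Suc[of "real m" "2 * k + 3"] by (simp add: numeral_eq_Suc)
  finally show ?thesis using assms by simp
qed

lemma rho_initial: "rho 0 k = 2 * real (Suc k) / 4 ^ Suc k * zeta_nat (2 * k + 3)"
proof -
  have summand: "rho_term 0 k (Suc i) = 2 * real (Suc k) / 4 ^ Suc k * (1 / real (Suc i) ^ (2 * k + 3))" for i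
    using scaled_inverse_even_sq_power[of "Suc i" "real (Suc k)" k]
    by (simp add: rho_term_def odd_poly_quot_def inv_gap_sum_def)
  have "(\<lambda>i. 2 * real (Suc k) / 4 ^ Suc k * (1 / real (Suc i) ^ (2 * k + 3)))
      sums (2 * real (Suc k) / 4 ^ Suc k * zeta_nat (2 * k + 3))"
    by (intro sums_mult zeta_nat_sums) simp
  then show ?thesis unfolding rho_def summand[symmetric] by (rule sums_unique[symmetric])
qed

lemma sums_rho_term_limit:
  "(\<lambda>i. 8 * real (Suc i) * (-1) ^ Suc i * (real (k + 1) / even_sq (Suc i) ^ (k + 2)))
     sums (- (1 - 1 / 4 ^ Suc k) * rho 0 k)"
proof -
  define C where "C = 2 * real (Suc k) / 4 ^ Suc k"
  have "8 * real (Suc i) * (-1) ^ Suc i * (real (k + 1) / even_sq (Suc i) ^ (k + 2))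
      = - C * ((-1) ^ i / real (Suc i) ^ (2 * k + 3))" for i
  proof -
    define A where "A = 8 * real (Suc i) * (real (k + 1) / even_sq (Suc i) ^ (k + 2))"
    have "A = C * (1 / real (Suc i) ^ (2 * k + 3))"
      using scaled_inverse_even_sq_power[of "Suc i" "real (k + 1)" k] by (simp add: A_def C_def)
    moreover have "8 * real (Suc i) * (-1) ^ Suc i * (real (k + 1) / even_sq (Suc i) ^ (k + 2)) = - ((-1) ^ i * A)"
      by (simp add: A_def mult_ac)
    ultimately show ?thesis by simp
  qed
  moreover have "(\<lambda>i. - C * ((-1) ^ i / real (Suc i) ^ (2 * k + 3)))
      sums (- C * ((1 - 2 / 2 ^ (2 * k + 3)) * zeta_nat (2 * k + 3)))"
    by (intro sums_mult sums_alternating_inverse_powers) simp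
  moreover have "2 / (2::real) ^ (2 * k + 3) = 1 / 4 ^ Suc k"
    by (simp add: power_add power_mult)
  then have "- C * ((1 - 2 / 2 ^ (2 * k + 3)) * zeta_nat (2 * k + 3)) = - (1 - 1 / 4 ^ Suc k) * rho 0 k"
    unfolding rho_initial C_def by (simp only: mult_ac minus_mult_left)
  ultimately show ?thesis by simp
qed

lemma rho_tendsto_Suc: "(\<lambda>N. rho N (Suc k)) \<longlonglongrightarrow> - (1 - 1 / 4 ^ Suc (Suc k)) * rho 0 (Suc k)"
proof -
  have "(\<lambda>N. \<Sum>i. rho_term N (Suc k) (Suc i))
      \<longlonglongrightarrow> (\<Sum>i. 8 * real (Suc i) * (-1) ^ Suc i * (real (Suc k + 1) / even_sq (Suc i) ^ (Suc k + 2)))"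
  proof (rule tannerys_theorem[THEN conjunct2, THEN conjunct2])
    show "(\<lambda>N. rho_term N (Suc k) (Suc i))
        \<longlonglongrightarrow> 8 * real (Suc i) * (-1) ^ Suc i * (real (Suc k + 1) / even_sq (Suc i) ^ (Suc k + 2))" for i
      by (rule rho_term_tendsto) simp
    show "\<forall>\<^sub>F (i, N) in sequentially \<times>\<^sub>F sequentially.
        norm (rho_term N (Suc k) (Suc i)) \<le> (real (Suc k) + 2) / real (Suc i) ^ 2"
    proof (rule always_eventually, clarify)
      show "norm (rho_term N (Suc k) (Suc i)) \<le> (real (Suc k) + 2) / real (Suc i) ^ 2" for i N
        using abs_rho_term_le_k[of "Suc i" "Suc k" N] by simp
    qed
  qed (simp_all only: summable_inverse_Suc_sq sequentially_bot not_False_eq_True)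
  then show ?thesis
    using sums_rho_term_limit[of "Suc k"] by (simp add: rho_def sums_iff)
qed

lemma rho_tendsto: "(\<lambda>N. rho N k) \<longlonglongrightarrow> - (1 - 1 / 4 ^ Suc k) * rho 0 k"
proof (cases k)
  case 0
  \<comment> \<open>For \<open>k = 0\<close> the bound behind Tannery's theorem is not summable; telescope instead.\<close>
  have "(\<lambda>N. rho 0 0 - (\<Sum>j<N. 1 / (2 * real j + 1) ^ 3)) \<longlonglongrightarrow> rho 0 0 - (1 - 1 / 2 ^ 3) * zeta_nat 3"
    using sums_odd_inverse_powers[of 3] unfolding sums_def by (intro tendsto_diff tendsto_const) simp
  moreover have "(\<lambda>N. rho N 0) = (\<lambda>N. rho 0 0 - (\<Sum>j<N. 1 / (2 * real j + 1) ^ 3))"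
    by (rule ext) (rule rho_N_0_eq)
  moreover have "rho 0 0 - (1 - 1 / 2 ^ 3) * zeta_nat 3 = - (1 - 1 / 4 ^ Suc 0) * rho 0 0"
    by (simp add: rho_initial)
  ultimately show ?thesis
    using 0 by simp
qed (simp only: rho_tendsto_Suc)

section \<open>Truncated multiple \<open>t\<close>-values\<close>

definition mtv_indices :: "nat \<Rightarrow> nat \<Rightarrow> nat list set" where
  "mtv_indices n N = {ns. length ns = n \<and> sorted_wrt (<) ns \<and> (\<forall>x\<in>set ns. 1 \<le> x \<and> x \<le> N)}"

definition mtv_term :: "nat list \<Rightarrow> nat list \<Rightarrow> real" where
  "mtv_term ks ns = (\<Prod>i<length ks. 1 / (2 * real (ns ! i) - 1) ^ (ks ! i))"

definition mtv_trunc :: "nat list \<Rightarrow> nat \<Rightarrow> real" where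
  "mtv_trunc ks N = sum (mtv_term ks) (mtv_indices (length ks) N)"

lemma finite_mtv_indices: "finite (mtv_indices n N)"
proof (rule finite_subset)
  show "mtv_indices n N \<subseteq> {ns. set ns \<subseteq> {..N} \<and> length ns = n}"
    by (auto simp: mtv_indices_def)
qed (simp add: finite_lists_length_eq)

lemma mtv_indices_0 [simp]: "mtv_indices 0 N = {[]}"
  by (auto simp: mtv_indices_def)

lemma mtv_indices_Suc_0 [simp]: "mtv_indices (Suc n) 0 = {}"
  by (auto simp: mtv_indices_def length_Suc_conv)

lemma mtv_indices_Suc_Suc:
  "mtv_indices (Suc n) (Suc N) = mtv_indices (Suc n) N \<union> (\<lambda>ns. ns @ [Suc N]) ` mtv_indices n N"
proof (intro equalityI subsetI)
  fix ns assume ns: "ns \<in> mtv_indices (Suc n) (Suc N)"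
  show "ns \<in> mtv_indices (Suc n) N \<union> (\<lambda>ns. ns @ [Suc N]) ` mtv_indices n N"
  proof (cases "Suc N \<in> set ns")
    case True
    obtain xs x where nsx: "ns = xs @ [x]"
      using ns by (cases ns rule: rev_cases) (auto simp: mtv_indices_def)
    have xs: "sorted_wrt (<) xs" "\<forall>y\<in>set xs. y < x \<and> 1 \<le> y" "x \<le> Suc N"
      using ns unfolding mtv_indices_def nsx by (auto simp: sorted_wrt_append)
    then have "x = Suc N" using True nsx by fastforce
    then have "xs \<in> mtv_indices n N"
      using ns xs unfolding mtv_indices_def nsx by (auto simp: less_Suc_eq_le)
    then show ?thesis using nsx \<open>x = Suc N\<close> by blast
  next
    case False
    then have "ns \<in> mtv_indices (Suc n) N"
      using ns unfolding mtv_indices_def by (auto simp: le_Suc_eq)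
    then show ?thesis ..
  qed
next
  fix ns assume "ns \<in> mtv_indices (Suc n) N \<union> (\<lambda>ns. ns @ [Suc N]) ` mtv_indices n N"
  then show "ns \<in> mtv_indices (Suc n) (Suc N)"
    unfolding mtv_indices_def by (fastforce simp: sorted_wrt_append less_Suc_eq_le le_Suc_eq)
qed

lemma mtv_term_snoc:
  "length ns = length ks \<Longrightarrow> mtv_term (ks @ [k]) (ns @ [n]) = mtv_term ks ns / (2 * real n - 1) ^ k"
  by (simp add: mtv_term_def nth_append)

lemma mtv_term_nonneg:
  assumes "length ns = length ks" "\<forall>n\<in>set ns. 1 \<le> n"
  shows "0 \<le> mtv_term ks ns"
proof -
  have "0 \<le> 2 * real (ns ! i) - 1" if "i < length ks" for i
    using assms nth_mem[of i ns] that by fastforce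
  then show ?thesis unfolding mtv_term_def by (intro prod_nonneg divide_nonneg_nonneg zero_le_power) auto
qed

lemma mtv_trunc_Nil [simp]: "mtv_trunc [] N = 1"
  by (simp add: mtv_trunc_def mtv_term_def)

lemma mtv_trunc_snoc_0 [simp]: "mtv_trunc (ks @ [k]) 0 = 0"
  by (simp add: mtv_trunc_def)

lemma mtv_trunc_snoc_Suc:
  "mtv_trunc (ks @ [k]) (Suc N) = mtv_trunc (ks @ [k]) N + mtv_trunc ks N / (2 * real N + 1) ^ k"
proof -
  have "mtv_trunc (ks @ [k]) (Suc N)
      = mtv_trunc (ks @ [k]) N + sum (mtv_term (ks @ [k])) ((\<lambda>ns. ns @ [Suc N]) ` mtv_indices (length ks) N)"
    unfolding mtv_trunc_def length_append_singleton mtv_indices_Suc_Suc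
    by (rule sum.union_disjoint) (auto simp: finite_mtv_indices, auto simp: mtv_indices_def)
  also have "sum (mtv_term (ks @ [k])) ((\<lambda>ns. ns @ [Suc N]) ` mtv_indices (length ks) N)
      = (\<Sum>ns\<in>mtv_indices (length ks) N. mtv_term ks ns / (2 * real (Suc N) - 1) ^ k)"
    by (subst sum.reindex) (auto simp: inj_on_def mtv_indices_def mtv_term_snoc simp del: of_nat_Suc)
  finally show ?thesis by (simp add: mtv_trunc_def sum_divide_distrib add.commute)
qed

lemma mtv_trunc_antimono:
  assumes "list_all2 (\<le>) ks ks'"
  shows "mtv_trunc ks' N \<le> mtv_trunc ks N"
proof -
  have "length ks' = length ks" using assms by (simp add: list_all2_lengthD)
  moreover have "mtv_term ks' ns \<le> mtv_term ks ns" if "ns \<in> mtv_indices (length ks) N" for ns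
    unfolding mtv_term_def \<open>length ks' = length ks\<close>
  proof (rule prod_mono)
    fix i assume "i \<in> {..<length ks}"
    then have "1 \<le> 2 * real (ns ! i) - 1" "ks ! i \<le> ks' ! i"
      using that assms by (auto simp: mtv_indices_def list_all2_conv_all_nth)
    then show "0 \<le> 1 / (2 * real (ns ! i) - 1) ^ (ks' ! i)
        \<and> 1 / (2 * real (ns ! i) - 1) ^ (ks' ! i) \<le> 1 / (2 * real (ns ! i) - 1) ^ (ks ! i)"
      by (auto intro!: divide_left_mono power_increasing)
  qed
  ultimately show ?thesis by (simp add: mtv_trunc_def sum_mono)
qed

lemma subset_mtv_indices:
  fixes X :: "nat list set"
  assumes "finite X" "X \<subseteq> {ns. length ns = n \<and> sorted_wrt (<) ns \<and> (\<forall>x\<in>set ns. 1 \<le> x)}"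
    and "N \<ge> Max (\<Union>ns\<in>X. set ns)"
  shows "X \<subseteq> mtv_indices n N"
proof
  fix ns assume "ns \<in> X"
  have "x \<le> N" if "x \<in> set ns" for x
  proof -
    have "x \<in> (\<Union>ns\<in>X. set ns)" using \<open>ns \<in> X\<close> that by blast
    moreover have "finite (\<Union>ns\<in>X. set ns)" using assms(1) by simp
    ultimately show ?thesis using Max_ge assms(3) order.trans by blast
  qed
  then show "ns \<in> mtv_indices n N"
    using assms(2) \<open>ns \<in> X\<close> by (auto simp: mtv_indices_def)
qed

lemma filterlim_mtv_indices:
  "filterlim (mtv_indices n)
     (finite_subsets_at_top {ns. length ns = n \<and> sorted_wrt (<) ns \<and> (\<forall>x\<in>set ns. 1 \<le> x)}) sequentially"
  unfolding filterlim_finite_subsets_at_top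
proof (intro allI impI)
  fix X :: "nat list set"
  assume X: "finite X \<and> X \<subseteq> {ns. length ns = n \<and> sorted_wrt (<) ns \<and> (\<forall>x\<in>set ns. 1 \<le> x)}"
  have "mtv_indices n N \<subseteq> {ns. length ns = n \<and> sorted_wrt (<) ns \<and> (\<forall>x\<in>set ns. 1 \<le> x)}" for N
    by (auto simp: mtv_indices_def)
  then show "\<forall>\<^sub>F N in sequentially. finite (mtv_indices n N) \<and> X \<subseteq> mtv_indices n N
      \<and> mtv_indices n N \<subseteq> {ns. length ns = n \<and> sorted_wrt (<) ns \<and> (\<forall>x\<in>set ns. 1 \<le> x)}"
    using X by (intro eventually_mono[OF eventually_ge_at_top[of "Max (\<Union>ns\<in>X. set ns)"]])
      (simp add: finite_mtv_indices subset_mtv_indices)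
qed

lemma mtv_trunc_tendsto:
  assumes "\<And>N. mtv_trunc ks N \<le> C"
  shows "(\<lambda>N. mtv_trunc ks N) \<longlonglongrightarrow> mtv ks"
proof -
  define A :: "nat list set" where "A = {ns. length ns = length ks \<and> sorted_wrt (<) ns \<and> (\<forall>x\<in>set ns. 1 \<le> x)}"
  have nonneg: "0 \<le> mtv_term ks ns" if "ns \<in> A" for ns
    using that by (intro mtv_term_nonneg) (auto simp: A_def)
  have "sum (mtv_term ks) X \<le> C" if "finite X" "X \<subseteq> A" for X
  proof -
    define N where "N = Max (\<Union>ns\<in>X. set ns)"
    have "X \<subseteq> mtv_indices (length ks) N"
      using that by (intro subset_mtv_indices) (simp_all add: A_def N_def)
    then have "sum (mtv_term ks) X \<le> mtv_trunc ks N"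
      unfolding mtv_trunc_def using nonneg
      by (intro sum_mono2 finite_mtv_indices) (auto simp: A_def mtv_indices_def)
    then show ?thesis using assms[of N] by linarith
  qed
  then have "mtv_term ks summable_on A"
    using nonneg by (intro nonneg_bounded_partial_sums_imp_summable_on eventually_finite_subsets_at_top_weakI)
  moreover have "mtv ks = infsum (mtv_term ks) A"
    by (simp add: mtv_def mtv_term_def[abs_def] A_def)
  ultimately have "(sum (mtv_term ks) \<longlongrightarrow> mtv ks) (finite_subsets_at_top A)"
    by (simp add: has_sum_def[symmetric])
  from filterlim_compose[OF this filterlim_mtv_indices[of "length ks", folded A_def]]
  show ?thesis by (simp add: mtv_trunc_def)
qed

lemma replicate_Suc_snoc: "replicate (Suc j) x = replicate j x @ [x]"
  by (simp add: replicate_append_same)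

lemma mtv_trunc_replicate_2_at_0: "mtv_trunc (replicate j 2) 0 = (if j = 0 then 1 else 0)"
  by (cases j) (simp_all only: replicate_Suc_snoc mtv_trunc_snoc_0, simp_all)

lemma mtv_trunc_replicate_2_Suc_Suc:
  "mtv_trunc (replicate (Suc j) 2) (Suc N)
     = mtv_trunc (replicate (Suc j) 2) N + mtv_trunc (replicate j 2) N / odd_sq (Suc N)"
  unfolding replicate_Suc_snoc mtv_trunc_snoc_Suc by (simp add: odd_sq_def add.commute)

lemma sum_inverse_odd_sq_le: "(\<Sum>n=1..N. 1 / odd_sq n) \<le> zeta_nat 2"
proof -
  have "(\<Sum>n=1..N. 1 / odd_sq n) = (\<Sum>i<N. 1 / odd_sq (Suc i))"
    by (simp add: sum.atLeast1_atMost_eq)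
  also have "\<dots> \<le> (\<Sum>i<N. 1 / real (Suc i) ^ 2)"
    by (intro sum_mono divide_left_mono) (auto simp: odd_sq_def intro!: power_mono)
  also have "\<dots> \<le> zeta_nat 2"
  proof -
    have "(\<lambda>n. 1 / real (Suc n) ^ 2) sums zeta_nat 2" by (rule zeta_nat_sums) simp
    then show ?thesis
      using sum_le_suminf[of "\<lambda>n. 1 / real (Suc n) ^ 2" "{..<N}"] by (simp add: sums_iff)
  qed
  finally show ?thesis .
qed

lemma mtv_trunc_replicate_2_le: "mtv_trunc (replicate j 2) N \<le> exp (zeta_nat 2)"
proof -
  have "mtv_trunc (replicate j 2) N \<le> (\<Prod>n=1..N. 1 + 1 / odd_sq n)"
  proof (induction N arbitrary: j)
    case 0
    show ?case by (simp add: mtv_trunc_replicate_2_at_0)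
  next
    case (Suc N)
    have "odd_sq (Suc N) > 0" by (simp add: odd_sq_pos)
    have "mtv_trunc (replicate j 2) (Suc N) \<le> (\<Prod>n=1..N. 1 + 1 / odd_sq n) * (1 + 1 / odd_sq (Suc N))"
    proof (cases j)
      case 0
      have "1 * 1 \<le> (\<Prod>n=1..N. 1 + 1 / odd_sq n) * (1 + 1 / odd_sq (Suc N))"
        using Suc.IH[of 0] \<open>odd_sq (Suc N) > 0\<close> by (intro mult_mono) auto
      then show ?thesis using 0 by simp
    next
      case (Suc i)
      have "mtv_trunc (replicate i 2) N / odd_sq (Suc N) \<le> (\<Prod>n=1..N. 1 + 1 / odd_sq n) / odd_sq (Suc N)"
        using Suc.IH[of i] \<open>odd_sq (Suc N) > 0\<close> by (simp add: divide_right_mono)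
      from add_mono[OF Suc.IH[of "Suc i"] this] show ?thesis
        unfolding Suc mtv_trunc_replicate_2_Suc_Suc by (simp add: distrib_left)
    qed
    then show ?case by (simp add: prod.nat_ivl_Suc')
  qed
  also have "\<dots> \<le> (\<Prod>n=1..N. exp (1 / odd_sq n))"
    by (intro prod_mono) (auto simp: odd_sq_pos add_pos_nonneg less_imp_le)
  also have "\<dots> \<le> exp (zeta_nat 2)"
    using sum_inverse_odd_sq_le[of N] by (simp flip: exp_sum)
  finally show ?thesis .
qed

lemma alternating_convolution_step:
  fixes a a' b b' :: "nat \<Rightarrow> 'a :: field"
  assumes a': "\<And>j. a' j = a j + (if j = 0 then 0 else a (j - 1) / u)"
    and b'_0: "b' 0 = b 0 - c"
    and b'_Suc: "\<And>k. b' (Suc k) = b (Suc k) + b' k / u"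
  shows "(\<Sum>j\<le>r. (-1) ^ j * a' j * b' (r - j)) = (\<Sum>j\<le>r. (-1) ^ j * a j * b (r - j)) - (-1) ^ r * a r * c"
proof (cases r)
  case 0
  then show ?thesis using a' by (simp add: b'_0 algebra_simps)
next
  case (Suc q)
  have "(\<Sum>j\<le>Suc q. (-1) ^ j * a' j * b' (Suc q - j))
      = (\<Sum>j\<le>Suc q. (-1) ^ j * a j * b' (Suc q - j))
        + (\<Sum>j\<le>Suc q. (-1) ^ j * (if j = 0 then 0 else a (j - 1) / u) * b' (Suc q - j))"
    unfolding a' by (simp add: algebra_simps sum.distrib)
  also have "(\<Sum>j\<le>Suc q. (-1) ^ j * (if j = 0 then 0 else a (j - 1) / u) * b' (Suc q - j))
      = - (\<Sum>j\<le>q. (-1) ^ j * a j * (b' (q - j) / u))"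
    by (subst sum.atMost_Suc_shift) (simp add: sum_negf[symmetric])
  also have "(\<Sum>j\<le>Suc q. (-1) ^ j * a j * b' (Suc q - j))
      = (\<Sum>j\<le>q. (-1) ^ j * a j * b (Suc q - j)) + (\<Sum>j\<le>q. (-1) ^ j * a j * (b' (q - j) / u))
        + (-1) ^ Suc q * a (Suc q) * (b 0 - c)"
  proof -
    have "(-1) ^ j * a j * b' (Suc q - j) = (-1) ^ j * a j * b (Suc q - j) + (-1) ^ j * a j * (b' (q - j) / u)"
      if "j \<le> q" for j
      using that by (simp add: Suc_diff_le b'_Suc algebra_simps)
    then show ?thesis by (simp add: sum.distrib b'_0)
  qed
  finally show ?thesis
    unfolding Suc by (simp add: algebra_simps)
qed

lemma mtv_trunc_replicate_2_3_eq:
  "(-1) ^ r * mtv_trunc (replicate r 2 @ [3]) N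
     = rho 0 r - (\<Sum>j\<le>r. (-1) ^ j * mtv_trunc (replicate j 2) N * rho N (r - j))"
proof (induction N arbitrary: r)
  case 0
  have "(\<Sum>j\<le>r. (-1) ^ j * mtv_trunc (replicate j 2) 0 * rho 0 (r - j)) = rho 0 r"
    by (subst sum.atMost_shift) (simp add: mtv_trunc_replicate_2_at_0 del: replicate.simps)
  then show ?case by simp
next
  case (Suc N)
  have "(\<Sum>j\<le>r. (-1) ^ j * mtv_trunc (replicate j 2) (Suc N) * rho (Suc N) (r - j))
      = (\<Sum>j\<le>r. (-1) ^ j * mtv_trunc (replicate j 2) N * rho N (r - j))
        - (-1) ^ r * mtv_trunc (replicate r 2) N * (1 / (2 * real N + 1) ^ 3)"
  proof (rule alternating_convolution_step)
    show "mtv_trunc (replicate j 2) (Suc N)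
        = mtv_trunc (replicate j 2) N + (if j = 0 then 0 else mtv_trunc (replicate (j - 1) 2) N / odd_sq (Suc N))" for j
      by (cases j) (simp_all only: mtv_trunc_replicate_2_Suc_Suc, simp_all)
  qed (simp_all add: rho_Suc_0 rho_Suc_Suc)
  then show ?case
    using Suc.IH[of r] by (simp add: mtv_trunc_snoc_Suc algebra_simps)
qed

section \<open>Passing to the limit\<close>

lemma mtv_trunc_replicate_2_tendsto: "(\<lambda>N. mtv_trunc (replicate j 2) N) \<longlonglongrightarrow> mtv (replicate j 2)"
  by (rule mtv_trunc_tendsto) (rule mtv_trunc_replicate_2_le)

lemma mtv_trunc_replicate_2_3_tendsto:
  "(\<lambda>N. mtv_trunc (replicate r 2 @ [3]) N) \<longlonglongrightarrow> mtv (replicate r 2 @ [3])"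
proof (rule mtv_trunc_tendsto)
  have "list_all2 (\<le>) (replicate r 2 @ [2]) (replicate r 2 @ [3 :: nat])"
    by (simp add: list_all2_appendI list_all2_refl)
  then show "mtv_trunc (replicate r 2 @ [3]) N \<le> exp (zeta_nat 2)" for N
    using mtv_trunc_antimono mtv_trunc_replicate_2_le[of "Suc r" N]
    by (metis replicate_Suc_snoc order.trans)
qed

lemma mtv_replicate_2_3_alternating:
  "(-1) ^ r * mtv (replicate r 2 @ [3])
     = rho 0 r + (\<Sum>j\<le>r. (-1) ^ j * mtv (replicate j 2) * ((1 - 1 / 4 ^ Suc (r - j)) * rho 0 (r - j)))"
proof -
  have "(\<lambda>N. (-1) ^ r * mtv_trunc (replicate r 2 @ [3]) N) \<longlonglongrightarrow> (-1) ^ r * mtv (replicate r 2 @ [3])"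
    by (intro tendsto_mult tendsto_const mtv_trunc_replicate_2_3_tendsto)
  moreover have "(\<lambda>N. rho 0 r - (\<Sum>j\<le>r. (-1) ^ j * mtv_trunc (replicate j 2) N * rho N (r - j)))
      \<longlonglongrightarrow> rho 0 r - (\<Sum>j\<le>r. (-1) ^ j * mtv (replicate j 2) * (- (1 - 1 / 4 ^ Suc (r - j)) * rho 0 (r - j)))"
    by (intro tendsto_intros mtv_trunc_replicate_2_tendsto rho_tendsto)
  ultimately have "(-1) ^ r * mtv (replicate r 2 @ [3])
      = rho 0 r - (\<Sum>j\<le>r. (-1) ^ j * mtv (replicate j 2) * (- (1 - 1 / 4 ^ Suc (r - j)) * rho 0 (r - j)))"
    unfolding mtv_trunc_replicate_2_3_eq by (rule LIMSEQ_unique)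
  then show ?thesis
    by (simp only: minus_mult_left[symmetric] mult_minus_right sum_negf diff_minus_eq_add)
qed

lemma minus_one_power_mult_diff: "j \<le> r \<Longrightarrow> (-1 :: 'a :: comm_ring_1) ^ r * (-1) ^ j = (-1) ^ (r - j)"
proof -
  assume "j \<le> r"
  then obtain q where "r = q + j" using le_add_diff_inverse2 by metis
  then show ?thesis by (simp add: power_add mult.assoc)
qed

lemma mtv_replicate_2_3_eq:
  "mtv (replicate r 2 @ [3])
     = (-1) ^ r * rho 0 r + (\<Sum>k\<le>r. (-1) ^ k * (1 - 1 / 4 ^ Suc k) * rho 0 k * mtv (replicate (r - k) 2))"
proof -
  have "(\<Sum>j\<le>r. (-1) ^ r * ((-1) ^ j * mtv (replicate j 2) * ((1 - 1 / 4 ^ Suc (r - j)) * rho 0 (r - j))))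
      = (\<Sum>j\<le>r. (-1) ^ (r - j) * (1 - 1 / 4 ^ Suc (r - j)) * rho 0 (r - j) * mtv (replicate (r - (r - j)) 2))"
  proof (intro sum.cong refl)
    fix j assume "j \<in> {..r}"
    then have "r - (r - j) = j" "(-1) ^ r * (-1) ^ j = ((-1) ^ (r - j) :: real)"
      by (simp_all add: minus_one_power_mult_diff)
    moreover have "(-1) ^ r * ((-1) ^ j * mtv (replicate j 2) * ((1 - 1 / 4 ^ Suc (r - j)) * rho 0 (r - j)))
        = ((-1) ^ r * (-1) ^ j) * (1 - 1 / 4 ^ Suc (r - j)) * rho 0 (r - j) * mtv (replicate j 2)"
      by (simp only: mult_ac)
    ultimately show "(-1) ^ r * ((-1) ^ j * mtv (replicate j 2) * ((1 - 1 / 4 ^ Suc (r - j)) * rho 0 (r - j)))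
        = (-1) ^ (r - j) * (1 - 1 / 4 ^ Suc (r - j)) * rho 0 (r - j) * mtv (replicate (r - (r - j)) 2)"
      by simp
  qed
  also have "\<dots> = (\<Sum>k\<le>r. (-1) ^ k * (1 - 1 / 4 ^ Suc k) * rho 0 k * mtv (replicate (r - k) 2))"
    by (rule sum.reindex_bij_witness[of _ "\<lambda>k. r - k" "\<lambda>k. r - k"]) auto
  finally show ?thesis
    using arg_cong[OF mtv_replicate_2_3_alternating[of r], of "\<lambda>x. (-1) ^ r * x"]
    by (simp add: distrib_left sum_distrib_left)
qed

lemma mtv_Nil [simp]: "mtv [] = 1"
proof -
  have "{ns :: nat list. length ns = 0 \<and> sorted_wrt (<) ns \<and> (\<forall>n\<in>set ns. 1 \<le> n)} = {[]}" by auto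
  then show ?thesis by (simp add: mtv_def)
qed

lemma d_coeff_zeta:
  assumes "k \<le> r"
  shows "d_coeff r (Suc k) * (1 / 2 ^ (2 * Suc k)) * zeta_nat (2 * Suc k + 1)
       = ((if k = r then 1 else 0) + (1 - 1 / 4 ^ Suc k)) * rho 0 k"
proof -
  have binom: "real ((2 * Suc k) choose (2 * r + 1)) = (if k = r then 1 else 0) * (2 * real (Suc k))"
  proof (cases "k = r")
    case True
    then have "(2 * Suc k) choose (2 * r + 1) = Suc (2 * r + 1) choose (2 * r + 1)" by simp
    then show ?thesis using True by (simp only: binomial_Suc_n) simp
  next
    case False
    then have "2 * Suc k < 2 * r + 1" using assms by simp
    then show ?thesis using False by (simp add: binomial_eq_0)
  qed
  have "(2::real) ^ (2 * Suc k) = 4 ^ Suc k" "2 * Suc k + 1 = 2 * k + 3"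
    by (simp_all only: power_mult) simp_all
  then show ?thesis
    unfolding d_coeff_def binom rho_initial by (simp only:) (simp add: field_simps)
qed

lemma sum_d_coeff_eq:
  fixes t :: "nat \<Rightarrow> real"
  shows "(\<Sum>k=1..r+1. (-1) ^ (k+1) * d_coeff r k * (1 / 2 ^ (2*k)) * zeta_nat (2*k+1) * t (r+1-k))
       = (-1) ^ r * rho 0 r * t 0 + (\<Sum>k\<le>r. (-1) ^ k * (1 - 1 / 4 ^ Suc k) * rho 0 k * t (r - k))"
proof -
  have shift: "(\<Sum>k=1..r+1. f k) = (\<Sum>k\<le>r. f (Suc k))" for f :: "nat \<Rightarrow> real"
    using sum.atLeast1_atMost_eq[of f "r + 1"] by (simp add: lessThan_Suc_atMost)
  have "(\<Sum>k=1..r+1. (-1) ^ (k+1) * d_coeff r k * (1 / 2 ^ (2*k)) * zeta_nat (2*k+1) * t (r+1-k))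
      = (\<Sum>k\<le>r. (-1) ^ k * ((if k = r then 1 else 0) + (1 - 1 / 4 ^ Suc k)) * rho 0 k * t (r - k))"
    unfolding shift
  proof (intro sum.cong refl)
    fix k assume "k \<in> {..r}"
    then have "k \<le> r" by simp
    have "(-1) ^ (Suc k + 1) * d_coeff r (Suc k) * (1 / 2 ^ (2 * Suc k)) * zeta_nat (2 * Suc k + 1) * t (r + 1 - Suc k)
        = (-1) ^ k * (d_coeff r (Suc k) * (1 / 2 ^ (2 * Suc k)) * zeta_nat (2 * Suc k + 1)) * t (r - k)"
      by (simp only: mult_ac) simp
    then show "(-1) ^ (Suc k + 1) * d_coeff r (Suc k) * (1 / 2 ^ (2 * Suc k)) * zeta_nat (2 * Suc k + 1) * t (r + 1 - Suc k)
        = (-1) ^ k * ((if k = r then 1 else 0) + (1 - 1 / 4 ^ Suc k)) * rho 0 k * t (r - k)"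
      unfolding d_coeff_zeta[OF \<open>k \<le> r\<close>] by (simp only: mult.assoc)
  qed
  also have "\<dots> = (\<Sum>k\<le>r. (if k = r then (-1) ^ r * rho 0 r * t 0 else 0)
      + (-1) ^ k * (1 - 1 / 4 ^ Suc k) * rho 0 k * t (r - k))"
    by (intro sum.cong refl) (simp add: algebra_simps)
  finally show ?thesis
    by (simp add: sum.distrib)
qed

theorem theorem3p3:
  fixes r :: nat
  shows "mtv (replicate r 2 @ [3]) =
    (\<Sum>k=1..r+1. (-1) ^ (k+1) * d_coeff r k * (1 / 2 ^ (2*k)) * zeta_nat (2*k+1)
        * mtv (replicate (r+1-k) 2))"
  using mtv_replicate_2_3_eq[of r] sum_d_coeff_eq[of r "\<lambda>j. mtv (replicate j 2)"] by simp

end
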